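(* Let $A$ be a finite alphabet of size $m$, and let $w=\mu^{\omega}(a)$ where $a\in A$ and $\mu$ is an $r$-uniform morphism ($r\ge2$) prolongable on $a$; suppose $w$ is aperiodic and uniformly recurrent. Let $t$ be a substring of $w$ such that every length-2 substring of $w$ is a substring of $t$, and let $s$ be a substring of $w$ of the form $s=ftg$ with letters $f,g\in A$. Fix a nonnegative integer $n$ and suppose that $\mu^n(s)$ is a substring of $w$, say $\mu^n(s)=w_{[\gamma,\gamma+|s|\cdot r^n]}$ for some $\gamma$. If $i$ is the remainder of $\gamma$ upon division by $r^n$, then $\gcd(i,r^n)>\frac{r^n}{m^2}$.
   Context: Words are $0$-indexed, and for a word $v$, $v_{[i,j]}$ denotes the substring of $v$ consisting of the letters at indices $i,i+1,\dots,j-1$. A morphism $\mu$ satisfies $\mu(uv)=\mu(u)\mu(v)$ for finite $u$; it is $r$-uniform if $|\mu(b)|=r$ for all $b\in A$; prolongable on $a$ means $\mu(a)$ begins with $a$, and $\mu^{\omega}(a)$ is the infinite word having every $\mu^n(a)$ as a prefix. Aperiodic: no periodic suffix. Uniformly recurrent: for every $a$ there is $b$ such that every length-$a$ substring of $w$ occurs in every length-$b$ substring of $w$. The convention $\gcd(0,r^n)=r^n$ is used. *)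

theory Defs
  imports Complex_Main "HOL-Library.Sublist"
begin

text \<open>Infinite words are functions nat => 'a. The factor of w of length l
starting at index k, i.e. w_[k, k+l].\<close>
definition factor :: "(nat \<Rightarrow> 'a) \<Rightarrow> nat \<Rightarrow> nat \<Rightarrow> 'a list" where
  "factor w k l = map w [k..<k+l]"

definition is_factor :: "'a list \<Rightarrow> (nat \<Rightarrow> 'a) \<Rightarrow> bool" where
  "is_factor u w \<longleftrightarrow> (\<exists>k. u = factor w k (length u))"

definition morph_ext :: "('a \<Rightarrow> 'a list) \<Rightarrow> 'a list \<Rightarrow> 'a list" where
  "morph_ext \<mu> u = concat (map \<mu> u)"

definition morph_pow :: "('a \<Rightarrow> 'a list) \<Rightarrow> nat \<Rightarrow> 'a list \<Rightarrow> 'a list" where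
  "morph_pow \<mu> n = (morph_ext \<mu> ^^ n)"

definition uniform :: "nat \<Rightarrow> ('a \<Rightarrow> 'a list) \<Rightarrow> bool" where
  "uniform r \<mu> \<longleftrightarrow> (\<forall>b. length (\<mu> b) = r)"

definition prolongable :: "('a \<Rightarrow> 'a list) \<Rightarrow> 'a \<Rightarrow> bool" where
  "prolongable \<mu> a \<longleftrightarrow> \<mu> a \<noteq> [] \<and> hd (\<mu> a) = a"

definition is_fixpoint_word :: "('a \<Rightarrow> 'a list) \<Rightarrow> 'a \<Rightarrow> (nat \<Rightarrow> 'a) \<Rightarrow> bool" where
  "is_fixpoint_word \<mu> a w \<longleftrightarrow>
     (\<forall>n. factor w 0 (length (morph_pow \<mu> n [a])) = morph_pow \<mu> n [a])"

definition aperiodic :: "(nat \<Rightarrow> 'a) \<Rightarrow> bool" where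
  "aperiodic w \<longleftrightarrow> \<not> (\<exists>p N. p > 0 \<and> (\<forall>k\<ge>N. w (k + p) = w k))"

definition uniformly_recurrent :: "(nat \<Rightarrow> 'a) \<Rightarrow> bool" where
  "uniformly_recurrent w \<longleftrightarrow>
     (\<forall>a. \<exists>b. \<forall>j k. \<exists>l. k \<le> l \<and> l + a \<le> k + b \<and> factor w j a = factor w l a)"

end

(*
  Write N = r^n and i = \<gamma> mod N. Since w = \<mu>^n(w), w is the concatenation of the
  blocks \<mu>^n(w_K) placed at the multiples of N. Every aligned window w_[KN, KN+2N] is
  the image of a two-letter factor of w; that factor occurs in t and hence in s, so the
  window recurs inside \<mu>^n(s) = w_[\<gamma>, \<gamma>+|s|N], at a position congruent to i mod N.
  Consequently, if every length-N factor starting at a position congruent to o is an image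
  \<mu>^n(b), the same holds for o - i, and by Bezout for every position divisible by
  d = gcd(i, N). Reading w in blocks of length d, the block word then has at most m factors
  of length N/d, so by the Morse-Hedlund theorem aperiodicity forces N/d < m.
  This gives gcd(i, N) > N/m, stronger than the claim.
*)

theory Submission
  imports Defs
begin

lemma morph_pow_add: "morph_pow \<mu> (n + k) u = morph_pow \<mu> n (morph_pow \<mu> k u)"
  by (simp add: morph_pow_def funpow_add)

lemma morph_pow_Suc: "morph_pow \<mu> (Suc n) u = morph_ext \<mu> (morph_pow \<mu> n u)"
  by (simp add: morph_pow_def)

lemma morph_pow_append: "morph_pow \<mu> n (u @ v) = morph_pow \<mu> n u @ morph_pow \<mu> n v"
proof (induction n)
  case 0
  show ?case by (simp add: morph_pow_def)
next
  case (Suc n)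
  then show ?case by (simp add: morph_pow_Suc morph_ext_def)
qed

lemma length_morph_pow:
  assumes "uniform r \<mu>"
  shows "length (morph_pow \<mu> n u) = length u * r ^ n"
proof (induction n arbitrary: u)
  case (Suc n)
  have "length (morph_ext \<mu> v) = length v * r" for v
    using assms by (induction v) (simp_all add: morph_ext_def uniform_def)
  then show ?case
    using Suc by (simp add: morph_pow_def)
qed (simp add: morph_pow_def)

lemma length_factor [simp]: "length (factor w k l) = l"
  by (simp add: factor_def)

lemma factor_nth: "c < l \<Longrightarrow> factor w k l ! c = w (k + c)"
  by (simp add: factor_def)

lemma factor_add: "factor w x (k + l) = factor w x k @ factor w (x + k) l"
  unfolding factor_def using upt_add_eq_append[of x "x + k" l] by (simp add: add.assoc)

lemma take_factor: "k \<le> l \<Longrightarrow> take k (factor w x l) = factor w x k"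
  by (simp add: factor_def take_map)

lemma factor_infix:
  assumes "factor w x l = u @ v @ z"
  shows "v = factor w (x + length u) (length v)"
proof -
  have "l = length u + (length v + length z)"
    using arg_cong[OF assms, of length] by simp
  then have "factor w x l = factor w x (length u) @ factor w (x + length u) (length v)
      @ factor w (x + length u + length v) (length z)"
    by (simp add: factor_add)
  then show ?thesis
    using assms by (simp add: append_eq_append_conv)
qed

lemma factor_shift:
  assumes "factor w x l = factor w y l" and "c + l' \<le> l"
  shows "factor w (x + c) l' = factor w (y + c) l'"
proof (rule nth_equalityI)
  fix j assume "j < length (factor w (x + c) l')"
  then have "factor w x l ! (c + j) = factor w y l ! (c + j)" "c + j < l"
    using assms by simp_all
  then show "factor w (x + c) l' ! j = factor w (y + c) l' ! j"
    using \<open>j < _\<close> by (simp add: factor_nth add.assoc)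
qed simp

lemma fixpoint_word_prefix:
  assumes "uniform r \<mu>" and "is_fixpoint_word \<mu> a w"
  shows "factor w 0 (r ^ n) = morph_pow \<mu> n [a]"
proof -
  have "length (morph_pow \<mu> n [a]) = r ^ n"
    using length_morph_pow[OF assms(1)] by simp
  then show ?thesis
    using assms(2) unfolding is_fixpoint_word_def by metis
qed

lemma fixpoint_word_morph_pow_factor:
  assumes "uniform r \<mu>" and "2 \<le> r" and "is_fixpoint_word \<mu> a w"
  shows "morph_pow \<mu> n (factor w K l) = factor w (K * r ^ n) (l * r ^ n)"
proof -
  define p where "p = K + l"
  define z where "z = r ^ p - p"
  have "p < 2 ^ p" by (rule less_exp)
  also have "\<dots> \<le> r ^ p" using assms(2) by (simp add: power_mono)
  finally have "r ^ p = K + (l + z)" by (simp add: p_def z_def)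
  then have "factor w 0 (r ^ p) = factor w 0 K @ factor w K l @ factor w p z"
    using factor_add[of w 0 K "l + z"] factor_add[of w K l z] by (simp add: p_def)
  moreover have "factor w 0 (r ^ (n + p)) = morph_pow \<mu> n (factor w 0 (r ^ p))"
    using assms(1,3) by (simp add: fixpoint_word_prefix morph_pow_add)
  ultimately have "factor w 0 (r ^ (n + p)) = morph_pow \<mu> n (factor w 0 K)
      @ morph_pow \<mu> n (factor w K l) @ morph_pow \<mu> n (factor w p z)"
    by (simp add: morph_pow_append)
  from factor_infix[OF this] show ?thesis
    using assms(1) by (simp add: length_morph_pow)
qed

lemma morph_pow_sublist_factor:
  assumes "uniform r \<mu>" and "sublist u s"
    and "morph_pow \<mu> n s = factor w \<gamma> (length s * r ^ n)"
  shows "\<exists>j. morph_pow \<mu> n u = factor w (\<gamma> + j * r ^ n) (length u * r ^ n)"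
proof -
  obtain p q where "s = p @ u @ q" using assms(2) unfolding sublist_def by blast
  then have "factor w \<gamma> (length s * r ^ n)
      = morph_pow \<mu> n p @ morph_pow \<mu> n u @ morph_pow \<mu> n q"
    using assms(3) by (simp add: morph_pow_append)
  from factor_infix[OF this] show ?thesis
    using assms(1) by (auto simp: length_morph_pow)
qed

lemma fixpoint_word_aligned_block:
  assumes "uniform r \<mu>" and "2 \<le> r" and "is_fixpoint_word \<mu> a w"
  shows "factor w (K * r ^ n) (r ^ n) = morph_pow \<mu> n [w K]"
proof -
  have "factor w K 1 = [w K]" by (simp add: factor_def)
  then show ?thesis
    using fixpoint_word_morph_pow_factor[OF assms, of n K 1] by simp
qed

lemma fixpoint_word_aligned_window_recurs:
  assumes "uniform r \<mu>" and "2 \<le> r" and "is_fixpoint_word \<mu> a w"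
    and "sublist (factor w K 2) s" and "morph_pow \<mu> n s = factor w \<gamma> (length s * r ^ n)"
  shows "\<exists>L. factor w (K * r ^ n) (2 * r ^ n) = factor w (L * r ^ n + \<gamma> mod r ^ n) (2 * r ^ n)"
proof -
  obtain j where "factor w (K * r ^ n) (2 * r ^ n) = factor w (\<gamma> + j * r ^ n) (2 * r ^ n)"
    using morph_pow_sublist_factor[OF assms(1,4,5)] fixpoint_word_morph_pow_factor[OF assms(1-3)]
    by fastforce
  moreover have "\<gamma> + j * r ^ n = (\<gamma> div r ^ n + j) * r ^ n + \<gamma> mod r ^ n"
    by (simp add: algebra_simps)
  ultimately show ?thesis by auto
qed

lemma not_aperiodic_if_right_extensions_unique:
  assumes "finite (range (\<lambda>l. factor v l k))"
    and ext: "\<And>a b. factor v a k = factor v b k \<Longrightarrow> v (a + k) = v (b + k)"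
  shows "\<not> aperiodic v"
proof -
  have factor_Suc: "factor v (Suc x) k = tl (factor v x k @ [v (x + k)])" for x
    using factor_add[of v x 1 k] factor_add[of v x k 1] by (simp add: factor_def)
  have shift: "factor v (a + j) k = factor v (b + j) k" if "factor v a k = factor v b k" for a b j
  proof (induction j)
    case (Suc j)
    then show ?case
      using ext[OF Suc] factor_Suc[of "a + j"] factor_Suc[of "b + j"] by simp
  qed (use that in simp)
  define c where "c = card (range (\<lambda>l. factor v l k))"
  have "\<not> inj_on (\<lambda>l. factor v l k) {0..c}"
  proof
    assume "inj_on (\<lambda>l. factor v l k) {0..c}"
    then have "card {0..c} \<le> c"
      unfolding c_def by (rule card_inj_on_le[OF _ _ assms(1)]) auto
    then show False by simp
  qed
  then obtain a b where "a < b" and ab: "factor v a k = factor v b k"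
    unfolding inj_on_def by (metis linorder_neq_iff)
  have "v (x + (b - a)) = v x" if x: "a + k \<le> x" for x
  proof -
    obtain j where "x = a + k + j" using le_Suc_ex[OF x] by blast
    then show ?thesis
      using ext[OF shift[OF ab, of j]] \<open>a < b\<close> by (simp add: algebra_simps)
  qed
  then have "\<exists>p N. p > 0 \<and> (\<forall>x\<ge>N. v (x + p) = v x)"
    using \<open>a < b\<close> by (intro exI[of _ "b - a"] exI[of _ "a + k"]) auto
  then show ?thesis
    unfolding aperiodic_def by blast
qed

lemma not_aperiodic_if_few_factors:
  assumes "finite (range (\<lambda>l. factor v l M))" and "card (range (\<lambda>l. factor v l M)) \<le> M"
  shows "\<not> aperiodic v"
proof -
  define F where "F k = range (\<lambda>l. factor v l k)" for k
  have F_take: "F k = take k ` F k'" if "k \<le> k'" for k k'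
    unfolding F_def image_image using that by (simp add: take_factor)
  have finite_F: "finite (F k)" if "k \<le> M" for k
    using F_take[OF that] assms(1) unfolding F_def by simp
  have "\<exists>k<M. card (F (Suc k)) \<le> card (F k)"
  proof (rule ccontr)
    assume "\<not> ?thesis"
    then have grow: "card (F k) < card (F (Suc k))" if "k < M" for k
      using that by (meson not_le)
    have "k < card (F k)" if "k \<le> M" for k
      using that
    proof (induction k)
      case 0
      have "F 0 = {[]}" unfolding F_def by (auto simp: factor_def)
      then show ?case by simp
    next
      case (Suc k)
      then show ?case using grow[of k] by simp
    qed
    then show False using assms(2) unfolding F_def by (metis le_refl not_le)
  qed
  then obtain k where "k < M" and card_Suc: "card (F (Suc k)) \<le> card (F k)"
    by blast
  have "card (F k) \<le> card (F (Suc k))"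
    using F_take[of k "Suc k"] finite_F[of "Suc k"] \<open>k < M\<close> by (simp add: card_image_le)
  then have inj: "inj_on (take k) (F (Suc k))"
    using F_take[of k "Suc k"] card_Suc finite_F[of "Suc k"] \<open>k < M\<close>
    by (simp add: inj_on_iff_eq_card)
  have "v (a + k) = v (b + k)" if "factor v a k = factor v b k" for a b
  proof -
    have "factor v a (Suc k) = factor v b (Suc k)"
      using inj_onD[OF inj, of "factor v a (Suc k)" "factor v b (Suc k)"] that
      by (simp add: F_def take_factor)
    then show ?thesis by (metis factor_nth lessI)
  qed
  moreover have "finite (F k)" using finite_F \<open>k < M\<close> by simp
  ultimately show ?thesis
    unfolding F_def by (intro not_aperiodic_if_right_extensions_unique)
qed

lemma not_aperiodic_if_few_aligned_factors:
  assumes "0 < d" and "finite B" and "card B \<le> M" and "\<And>l. factor w (l * d) (M * d) \<in> B"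
  shows "\<not> aperiodic w"
proof -
  define v where "v l = factor w (l * d) d" for l
  have concat_v: "concat (factor v l k) = factor w (l * d) (k * d)" for l k
  proof (induction k)
    case (Suc k)
    have "factor v l (Suc k) = factor v l k @ [v (l + k)]"
      using factor_add[of v l k 1] by (simp add: factor_def)
    moreover have "factor w (l * d) (Suc k * d) = factor w (l * d) (k * d) @ v (l + k)"
      using factor_add[of w "l * d" "k * d" d] by (simp add: v_def algebra_simps)
    ultimately show ?case using Suc by simp
  qed (simp add: factor_def)
  have inj: "inj_on concat (range (\<lambda>l. factor v l M))"
    by (rule inj_onI) (auto intro!: concat_injective simp: in_set_zip factor_nth v_def)
  have sub: "concat ` range (\<lambda>l. factor v l M) \<subseteq> B"
    using assms(4) by (auto simp: concat_v)
  have "finite (range (\<lambda>l. factor v l M))"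
    using inj_on_finite[OF inj sub assms(2)] .
  moreover have "card (range (\<lambda>l. factor v l M)) \<le> M"
    using card_inj_on_le[OF inj sub assms(2)] assms(3) by linarith
  ultimately have "\<not> aperiodic v"
    by (rule not_aperiodic_if_few_factors)
  then obtain p N0 where "p > 0" and per: "\<And>k. k \<ge> N0 \<Longrightarrow> v (k + p) = v k"
    unfolding aperiodic_def by blast
  have "w (x + p * d) = w x" if "N0 * d \<le> x" for x
  proof -
    have "N0 \<le> x div d" using div_le_mono[OF that, of d] assms(1) by simp
    then have "v (x div d + p) ! (x mod d) = v (x div d) ! (x mod d)" by (simp add: per)
    then show ?thesis
      using assms(1) by (simp add: v_def factor_nth algebra_simps)
  qed
  then show ?thesis
    unfolding aperiodic_def using \<open>p > 0\<close> assms(1) by (metis nat_0_less_mult_iff)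
qed

lemma mod_invariant_add_closed_gcd_dvd:
  fixes Q :: "nat \<Rightarrow> bool"
  assumes "Q 0" and "\<And>x. Q x \<Longrightarrow> Q (x + c)"
    and "\<And>x y. x mod N = y mod N \<Longrightarrow> Q x \<Longrightarrow> Q y" and "gcd c N dvd x"
  shows "Q x"
proof -
  have multiples: "Q (c * k)" for k
  proof (induction k)
    case (Suc k)
    then show ?case using assms(2) by (metis add.commute mult_Suc_right)
  qed (simp add: assms(1))
  show ?thesis
  proof (cases "c = 0")
    case True
    then have "0 mod N = x mod N" using assms(4) by simp
    then show ?thesis using assms(1,3) by blast
  next
    case False
    obtain y z where yz: "c * y = N * z + gcd c N" using bezout_nat[OF False] by blast
    obtain e where e: "x = gcd c N * e" using assms(4) by blast
    have "c * (y * e) = N * (z * e) + x"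
      using arg_cong[OF yz, of "\<lambda>u. u * e"] e by (simp add: algebra_simps)
    then have "(c * (y * e)) mod N = x mod N" by simp
    then show ?thesis using assms(3) multiples by blast
  qed
qed

lemma factor_in_blocks_at_gcd_multiples:
  fixes w :: "nat \<Rightarrow> 'a"
  assumes "i < N"
    and blocks: "\<And>K. factor w (K * N) N \<in> B"
    and windows: "\<And>K. \<exists>L. factor w (K * N) (2 * N) = factor w (L * N + i) (2 * N)"
    and "gcd i N dvd P"
  shows "factor w P N \<in> B"
proof -
  define good where "good x \<longleftrightarrow> (\<forall>P. P mod N = x mod N \<longrightarrow> factor w P N \<in> B)" for x
  have "good 0"
    unfolding good_def
  proof (intro allI impI)
    fix P assume "P mod N = 0 mod N"
    then have "P div N * N = P" using div_mult_mod_eq[of P N] by simp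
    then show "factor w P N \<in> B" using blocks[of "P div N"] by (simp only:)
  qed
  moreover have "good (x + (N - i))" if "good x" for x
    unfolding good_def
  proof (intro allI impI)
    fix P assume P: "P mod N = (x + (N - i)) mod N"
    obtain L where "factor w (P div N * N) (2 * N) = factor w (L * N + i) (2 * N)"
      using windows by blast
    moreover have "P mod N + N \<le> 2 * N"
      using \<open>i < N\<close> by simp
    ultimately have "factor w (P div N * N + P mod N) N = factor w (L * N + i + P mod N) N"
      by (rule factor_shift)
    moreover have "(L * N + i + P mod N) mod N = x mod N"
    proof -
      have "(L * N + i + P mod N) mod N = (i + P mod N) mod N"
        by (simp add: add.assoc)
      also have "\<dots> = (i + (x + (N - i))) mod N"
        by (simp add: P mod_add_right_eq)
      also have "i + (x + (N - i)) = x + N"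
        using \<open>i < N\<close> by simp
      finally show ?thesis by simp
    qed
    ultimately show "factor w P N \<in> B"
      using that unfolding good_def by simp
  qed
  moreover have "good y" if "good x" and "x mod N = y mod N" for x y
    using that unfolding good_def by simp
  moreover have "gcd (N - i) N dvd P"
    using \<open>i < N\<close> \<open>gcd i N dvd P\<close> by (simp add: gcd_diff2_nat)
  ultimately have "good P"
    by (rule mod_invariant_add_closed_gcd_dvd)
  then show ?thesis unfolding good_def by simp
qed

lemma block_length_less_gcd_mult_card:
  fixes w :: "nat \<Rightarrow> 'a"
  assumes "aperiodic w" and "finite B" and "i < N"
    and blocks: "\<And>K. factor w (K * N) N \<in> B"
    and windows: "\<And>K. \<exists>L. factor w (K * N) (2 * N) = factor w (L * N + i) (2 * N)"
  shows "N < gcd i N * card B"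
proof (rule ccontr)
  define d where "d = gcd i N"
  have "0 < d" and "d dvd N" using \<open>i < N\<close> by (simp_all add: d_def)
  assume "\<not> N < gcd i N * card B"
  then have "card B \<le> N div d"
    using \<open>0 < d\<close> by (simp add: less_eq_div_iff_mult_less_eq d_def mult.commute)
  moreover have "factor w (l * d) (N div d * d) \<in> B" for l
    using factor_in_blocks_at_gcd_multiples[OF \<open>i < N\<close> blocks windows] \<open>d dvd N\<close>
    by (simp add: d_def)
  ultimately have "\<not> aperiodic w"
    by (rule not_aperiodic_if_few_aligned_factors[OF \<open>0 < d\<close> \<open>finite B\<close>])
  then show False using assms(1) by blast
qed

theorem lemma8:
  fixes \<mu> :: "'a::finite \<Rightarrow> 'a list" and a f g :: 'a and w :: "nat \<Rightarrow> 'a"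
    and r m n \<gamma> :: nat and t s :: "'a list"
  assumes "m = card (UNIV :: 'a set)"
    and "r \<ge> 2" and "uniform r \<mu>" and "prolongable \<mu> a"
    and "is_fixpoint_word \<mu> a w"
    and "aperiodic w" and "uniformly_recurrent w"
    and "is_factor t w"
    and "\<forall>u. is_factor u w \<and> length u = 2 \<longrightarrow> sublist u t"
    and "s = f # t @ [g]" and "is_factor s w"
    and "morph_pow \<mu> n s = factor w \<gamma> (length s * r ^ n)"
  shows "real (gcd (\<gamma> mod r ^ n) (r ^ n)) > real (r ^ n) / real (m ^ 2)"
proof -
  define N where "N = r ^ n"
  define B where "B = range (\<lambda>b. morph_pow \<mu> n [b])"
  have "sublist (factor w K 2) s" for K
  proof -
    have "is_factor (factor w K 2) w" unfolding is_factor_def by auto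
    then have "sublist (factor w K 2) t" using assms(9) by simp
    moreover have "sublist t s" using assms(10) sublist_appendI[of t "[f]" "[g]"] by simp
    ultimately show ?thesis by (rule sublist_order.order_trans)
  qed
  then have "N < gcd (\<gamma> mod N) N * card B"
    unfolding N_def B_def using assms(2,3,5,6,12)
    by (intro block_length_less_gcd_mult_card fixpoint_word_aligned_window_recurs)
      (auto simp: fixpoint_word_aligned_block)
  also have "\<dots> \<le> gcd (\<gamma> mod N) N * m ^ 2"
  proof (rule mult_le_mono2)
    have "card B \<le> m" using assms(1) by (simp add: B_def card_image_le)
    also have "m \<le> m ^ 2" by (simp add: power2_eq_square le_square)
    finally show "card B \<le> m ^ 2" .
  qed
  finally have "real N < real (gcd (\<gamma> mod N) N) * real (m ^ 2)"
    by (metis of_nat_less_iff of_nat_mult)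
  moreover have "0 < m" using assms(1) by (simp add: finite_UNIV_card_ge_0)
  ultimately show ?thesis by (simp add: N_def divide_less_eq)
qed

end
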